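(* Let $w :: \bar v, \bar\sigma \Rightarrow \bar\rho, \bar\kappa$ be a raw match derivation. Then $\mathrm{bwd}_w : \mathrm{Sel}(\bar\rho)\times\mathrm{Sel}(\bar\kappa)\times\mathbb{A} \to \mathrm{Sel}(\bar v)\times\mathrm{Sel}(\bar\sigma)$ and $\mathrm{fwd}_w : \mathrm{Sel}(\bar v)\times\mathrm{Sel}(\bar\sigma)\to\mathrm{Sel}(\bar\rho)\times\mathrm{Sel}(\bar\kappa)\times\mathbb{A}$ form a Galois connection with $\mathrm{bwd}_w$ the lower adjoint: both are monotone, and for all $(\rho,\kappa,\alpha)$ and all $(v,\sigma)$ we have $\mathrm{fwd}_w(\mathrm{bwd}_w(\rho,\kappa,\alpha)) \ge (\rho,\kappa,\alpha)$ and $\mathrm{bwd}_w(\mathrm{fwd}_w(v,\sigma)) \le (v,\sigma)$.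
   Context: Fix a bounded lattice $(\mathbb{A},\le,\top,\bot,\sqcap,\sqcup)$ of "selection states". Raw values are $\bar v ::= \mathsf{true}\mid\mathsf{false}\mid n \mid [\,] \mid (\bar u : \bar v) \mid \langle x_1:\bar v_1,\dots,x_k:\bar v_k\rangle \mid$ closures. A selection of a raw value $\bar v$ is the same tree with an element of $\mathbb{A}$ attached to every Boolean, integer, nil, cons and record node (closures carry selections on their components), written $\mathsf{true}_\alpha$, $\mathsf{false}_\alpha$, $n_\alpha$, $[\,]_\alpha$, $(u :_\alpha v)$, $\langle x_1:v_1,\dots,x_k:v_k\rangle_\alpha$. $\mathrm{Sel}(\bar v)$ denotes the set of selections of shape $\bar v$, ordered pointwise; it is a bounded lattice. Likewise for every raw term, eliminator, continuation or environment $\bar X$, $\mathrm{Sel}(\bar X)$ is the pointwise-ordered lattice of its selections; $\bot$ also denotes the least selection of a given raw object. Environments are finite sequences $\rho = x_1:v_1,\dots,x_k:v_k$ with concatenation $\cdot$ and empty environment $\varepsilon$; selections of an environment are pointwise. Products of lattices are ordered componentwise. Eliminators: $\sigma ::= (x\mapsto\kappa) \mid \{\mathsf{true}\mapsto\kappa,\ \mathsf{false}\mapsto\kappa'\} \mid \{\langle x_1,\dots,x_k\rangle\mapsto\kappa\}\ (k\ge 0) \mid \{[\,]\mapsto\kappa,\ (:)\mapsto\sigma'\}$, where a continuation $\kappa$ is either a term or an eliminator. Eliminators carry no selection states of their own; a selection of an eliminator is a selection of each of its component continuations. Raw match derivations $w :: \bar v, \bar\sigma \Rightarrow \bar\rho,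 \bar\kappa$ are generated by: (var) $x :: \bar v, (x\mapsto\bar\kappa) \Rightarrow (x:\bar v), \bar\kappa$; (true) $\mathsf{true} :: \mathsf{true}, \{\mathsf{true}\mapsto\bar\kappa,\mathsf{false}\mapsto\bar\kappa'\} \Rightarrow \varepsilon, \bar\kappa$; (false) analogously yielding $\varepsilon,\bar\kappa'$; (nil) $[\,] :: [\,], \{[\,]\mapsto\bar\kappa,(:)\mapsto\bar\sigma\} \Rightarrow \varepsilon,\bar\kappa$; (cons) if $w_1 :: \bar v_1,\bar\sigma_1 \Rightarrow \bar\rho_1,\bar\tau$ and $w_2 :: \bar v_2,\bar\tau \Rightarrow \bar\rho_2,\bar\kappa$ then $(w_1:w_2) :: (\bar v_1:\bar v_2), \{[\,]\mapsto\bar\kappa_0,(:)\mapsto\bar\sigma_1\} \Rightarrow \bar\rho_1\cdot\bar\rho_2,\bar\kappa$; (unit) $\langle\rangle :: \langle\rangle, \{\langle\rangle\mapsto\bar\kappa\}\Rightarrow\varepsilon,\bar\kappa$; (record, $k\ge1$) if $w' :: \langle x_1:\bar v_1,\dots,x_{k-1}:\bar v_{k-1}\rangle, \{\langle x_1,\dots,x_{k-1}\rangle\mapsto\bar\kappa_0\} \Rightarrow \bar\rho,\bar\sigma'$ with $w' = \langle x_1:w_1,\dots,x_{k-1}:w_{k-1}\rangle$ and $w_k :: \bar v_k,\bar\sigma'\Rightarrow\bar\rho',\bar\kappa$, then $\langle x_1:w_1,\dots,x_k:w_k\rangle :: \langle x_1:\bar v_1,\dots,x_k:\bar v_k\rangle,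 \{\langle x_1,\dots,x_k\rangle\mapsto\bar\kappa_0\} \Rightarrow \bar\rho\cdot\bar\rho',\bar\kappa$. Forward match $\mathrm{fwd}_w$ is defined by recursion on $w$: (var) $\mathrm{fwd}(v, x\mapsto\kappa) = (x:v,\kappa,\top)$; (true) $\mathrm{fwd}(\mathsf{true}_\alpha,\{\mathsf{true}\mapsto\kappa,\mathsf{false}\mapsto\kappa'\}) = (\varepsilon,\kappa,\alpha)$; (false) $\mathrm{fwd}(\mathsf{false}_\alpha,\{\mathsf{true}\mapsto\kappa,\mathsf{false}\mapsto\kappa'\})=(\varepsilon,\kappa',\alpha)$; (nil) $\mathrm{fwd}([\,]_\alpha,\{[\,]\mapsto\kappa,(:)\mapsto\sigma'\})=(\varepsilon,\kappa,\alpha)$; (cons) if $\mathrm{fwd}_{w_1}(v_1,\sigma_1)=(\rho_1,\tau,\beta)$ and $\mathrm{fwd}_{w_2}(v_2,\tau)=(\rho_2,\kappa,\beta')$ then $\mathrm{fwd}_{w_1:w_2}((v_1:_\alpha v_2),\{[\,]\mapsto\kappa_0,(:)\mapsto\sigma_1\}) = (\rho_1\cdot\rho_2,\kappa,\alpha\sqcap\beta\sqcap\beta')$; (unit) $\mathrm{fwd}(\langle\rangle_\alpha,\{\langle\rangle\mapsto\kappa\}) = (\varepsilon,\kappa,\alpha)$; (record, $k\ge1$) if $\mathrm{fwd}_{w'}(\langle x_1:v_1,\dots,x_{k-1}:v_{k-1}\rangle_\top, \{\langle x_1,\dots,x_{k-1}\rangle\mapsto\kappa_0\}) = (\rho,\sigma',\beta)$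 and $\mathrm{fwd}_{w_k}(v_k,\sigma') = (\rho',\kappa,\beta')$ then $\mathrm{fwd}(\langle x_1:v_1,\dots,x_k:v_k\rangle_\alpha, \{\langle x_1,\dots,x_k\rangle\mapsto\kappa_0\}) = (\rho\cdot\rho',\kappa,\alpha\sqcap\beta\sqcap\beta')$. Backward match $\mathrm{bwd}_w$ is defined by recursion on $w$ (below $\bot$ is the least selection of the raw continuation of the untaken branch in $\bar\sigma$, and an environment selection in $\mathrm{Sel}(\bar\rho_1\cdot\bar\rho_2)$ is split uniquely as $\rho_1\cdot\rho_2$ with $\rho_i\in\mathrm{Sel}(\bar\rho_i)$): (var) $\mathrm{bwd}(x:v,\kappa,\alpha) = (v, x\mapsto\kappa)$; (true) $\mathrm{bwd}(\varepsilon,\kappa,\alpha) = (\mathsf{true}_\alpha,\{\mathsf{true}\mapsto\kappa,\mathsf{false}\mapsto\bot\})$; (false) $\mathrm{bwd}(\varepsilon,\kappa,\alpha) = (\mathsf{false}_\alpha,\{\mathsf{true}\mapsto\bot,\mathsf{false}\mapsto\kappa\})$; (nil) $\mathrm{bwd}(\varepsilon,\kappa,\alpha) = ([\,]_\alpha,\{[\,]\mapsto\kappa,(:)\mapsto\bot\})$; (cons) if $\mathrm{bwd}_{w_2}(\rho_2,\kappa,\alpha) = (v_2,\tau)$ and $\mathrm{bwd}_{w_1}(\rho_1,\tau,\alpha) = (v_1,\sigma_1)$ then $\mathrm{bwd}_{w_1:w_2}(\rho_1\cdot\rho_2,\kappa,\alpha) = ((v_1:_\alpha v_2),\{[\,]\mapsto\bot,(:)\mapsto\sigma_1\})$;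 (unit) $\mathrm{bwd}(\varepsilon,\kappa,\alpha) = (\langle\rangle_\alpha,\{\langle\rangle\mapsto\kappa\})$; (record, $k\ge 1$) if $\mathrm{bwd}_{w_k}(\rho_2,\kappa,\alpha) = (v_k,\sigma')$ and $\mathrm{bwd}_{w'}(\rho_1,\sigma',\alpha) = (\langle x_1:v_1,\dots,x_{k-1}:v_{k-1}\rangle_\beta, \{\langle x_1,\dots,x_{k-1}\rangle\mapsto\kappa_0\})$ then $\mathrm{bwd}(\rho_1\cdot\rho_2,\kappa,\alpha) = (\langle x_1:v_1,\dots,x_k:v_k\rangle_\alpha, \{\langle x_1,\dots,x_k\rangle\mapsto\kappa_0\})$. *)

theory Defs
  imports Main
begin

text \<open>Selections are represented by the datatypes below instantiated at the lattice
 type 'a of selection states; raw objects are the same datatypes instantiated at unit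
 (every annotation is the trivial value ()).\<close>

type_synonym var = string

text \<open>Terms are not specified in the context; we use a generic first-order syntax where each
 node has a label, a list of selection slots, subterms and embedded eliminators.\<close>

datatype 'a val =
    VTrue 'a
  | VFalse 'a
  | VInt int 'a
  | VNil 'a
  | VCons 'a "'a val" "'a val"
  | VRec "(var \<times> 'a val) list" 'a
  | VClos "(var \<times> 'a val) list" "(var \<times> 'a elim) list" "'a elim"
and 'a elim =
    EVar var "'a cont"
  | EBool "'a cont" "'a cont"
  | ERec "var list" "'a cont"
  | EList "'a cont" "'a elim"
and 'a cont =
    CTrm "'a trm"
  | CElim "'a elim"
and 'a trm =
    TNode string "'a list" "'a trm list" "'a elim list"

type_synonym 'a env = "(var \<times> 'a val) list"

datatype mderiv =
    MVar var
  | MTrue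
  | MFalse
  | MNil
  | MCons mderiv mderiv
  | MRec "(var \<times> mderiv) list"

abbreviation erase_val :: "'a val \<Rightarrow> unit val" where
  "erase_val v \<equiv> map_val (\<lambda>_. ()) v"
abbreviation erase_elim :: "'a elim \<Rightarrow> unit elim" where
  "erase_elim s \<equiv> map_elim (\<lambda>_. ()) s"
abbreviation erase_cont :: "'a cont \<Rightarrow> unit cont" where
  "erase_cont k \<equiv> map_cont (\<lambda>_. ()) k"
abbreviation erase_env :: "'a env \<Rightarrow> unit env" where
  "erase_env \<rho> \<equiv> map (\<lambda>(x, v). (x, erase_val v)) \<rho>"

definition Sel_val :: "unit val \<Rightarrow> 'a val set" where
  "Sel_val vr = {v. erase_val v = vr}"
definition Sel_elim :: "unit elim \<Rightarrow> 'a elim set" where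
  "Sel_elim sr = {s. erase_elim s = sr}"
definition Sel_cont :: "unit cont \<Rightarrow> 'a cont set" where
  "Sel_cont kr = {k. erase_cont k = kr}"
definition Sel_env :: "unit env \<Rightarrow> 'a env set" where
  "Sel_env rr = {\<rho>. erase_env \<rho> = rr}"

abbreviation leq_val :: "'a::order val \<Rightarrow> 'a val \<Rightarrow> bool" where
  "leq_val \<equiv> rel_val (\<le>)"
abbreviation leq_elim :: "'a::order elim \<Rightarrow> 'a elim \<Rightarrow> bool" where
  "leq_elim \<equiv> rel_elim (\<le>)"
abbreviation leq_cont :: "'a::order cont \<Rightarrow> 'a cont \<Rightarrow> bool" where
  "leq_cont \<equiv> rel_cont (\<le>)"
abbreviation leq_env :: "'a::order env \<Rightarrow> 'a env \<Rightarrow> bool" where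
  "leq_env \<equiv> list_all2 (rel_prod (=) (rel_val (\<le>)))"

definition leq_VS :: "'a::order val \<times> 'a elim \<Rightarrow> 'a val \<times> 'a elim \<Rightarrow> bool" where
  "leq_VS p q \<longleftrightarrow> leq_val (fst p) (fst q) \<and> leq_elim (snd p) (snd q)"
definition leq_RKA :: "'a::order env \<times> 'a cont \<times> 'a \<Rightarrow> 'a env \<times> 'a cont \<times> 'a \<Rightarrow> bool" where
  "leq_RKA p q \<longleftrightarrow> (case p of (\<rho>, \<kappa>, \<alpha>) \<Rightarrow> case q of (\<rho>', \<kappa>', \<alpha>') \<Rightarrow>
      leq_env \<rho> \<rho>' \<and> leq_cont \<kappa> \<kappa>' \<and> \<alpha> \<le> \<alpha>')"

inductive matches :: "mderiv \<Rightarrow> unit val \<Rightarrow> unit elim \<Rightarrow> unit env \<Rightarrow> unit cont \<Rightarrow> bool" where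
  m_var: "matches (MVar x) v (EVar x \<kappa>) [(x, v)] \<kappa>"
| m_true: "matches MTrue (VTrue ()) (EBool \<kappa> \<kappa>') [] \<kappa>"
| m_false: "matches MFalse (VFalse ()) (EBool \<kappa> \<kappa>') [] \<kappa>'"
| m_nil: "matches MNil (VNil ()) (EList \<kappa> \<sigma>) [] \<kappa>"
| m_cons: "matches w1 v1 \<sigma>1 \<rho>1 (CElim \<tau>) \<Longrightarrow> matches w2 v2 \<tau> \<rho>2 \<kappa> \<Longrightarrow>
     matches (MCons w1 w2) (VCons () v1 v2) (EList \<kappa>0 \<sigma>1) (\<rho>1 @ \<rho>2) \<kappa>"
| m_unit: "matches (MRec []) (VRec [] ()) (ERec [] \<kappa>) [] \<kappa>"
| m_rec: "matches (MRec ws) (VRec fs ()) (ERec xs \<kappa>0) \<rho> (CElim \<sigma>') \<Longrightarrow>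
     matches wk vk \<sigma>' \<rho>' \<kappa> \<Longrightarrow>
     matches (MRec (ws @ [(x, wk)])) (VRec (fs @ [(x, vk)]) ()) (ERec (xs @ [x]) \<kappa>0) (\<rho> @ \<rho>') \<kappa>"

lemma size_butlast_less:
  "ws \<noteq> [] \<Longrightarrow> size_list f (butlast ws) < size_list f ws + Suc 0"
  by (induct ws) auto

lemma size_butlast_less2:
  "ws \<noteq> [] \<Longrightarrow> size_list f (butlast ws) < size_list f ws"
  by (induct ws) auto

lemma size_snd_last_less:
  "ws \<noteq> [] \<Longrightarrow> size (snd (last ws)) < Suc (size_list (size_prod (\<lambda>_. 0) size) ws)"
  by (induct ws) auto

lemma size_last_less:
  "ws \<noteq> [] \<Longrightarrow> f (last ws) < size_list f ws + Suc 0"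
  by (induct ws) auto

text \<open>Number of bindings produced by a derivation (= length of the raw environment).\<close>
function mlen :: "mderiv \<Rightarrow> nat" where
  "mlen (MVar x) = 1"
| "mlen MTrue = 0"
| "mlen MFalse = 0"
| "mlen MNil = 0"
| "mlen (MCons w1 w2) = mlen w1 + mlen w2"
| "mlen (MRec ws) = (if ws = [] then 0 else mlen (MRec (butlast ws)) + mlen (snd (last ws)))"
  by pat_completeness auto
termination
  apply (relation "measure size")
  apply (auto simp: size_butlast_less size_butlast_less2 size_snd_last_less)
  done

text \<open>The record equation unfolds indefinitely under simp; it is kept only as a named fact.\<close>
declare mlen.simps(6) [simp del]

function tgt :: "mderiv \<Rightarrow> 'a elim \<Rightarrow> 'a cont" where
  "tgt (MVar x) (EVar y \<kappa>) = \<kappa>"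
| "tgt MTrue (EBool \<kappa> \<kappa>') = \<kappa>"
| "tgt MFalse (EBool \<kappa> \<kappa>') = \<kappa>'"
| "tgt MNil (EList \<kappa> \<sigma>) = \<kappa>"
| "tgt (MCons w1 w2) (EList \<kappa>0 \<sigma>1) =
     (case tgt w1 \<sigma>1 of CElim \<tau> \<Rightarrow> tgt w2 \<tau> | c \<Rightarrow> c)"
| "tgt (MRec ws) (ERec xs \<kappa>0) =
     (if ws = [] then \<kappa>0 else
      (case tgt (MRec (butlast ws)) (ERec (butlast xs) \<kappa>0) of
         CElim \<sigma>' \<Rightarrow> tgt (snd (last ws)) \<sigma>' | c \<Rightarrow> c))"
| "tgt (MVar v) (EBool va vb) = undefined"
| "tgt (MVar v) (ERec va vb) = undefined"
| "tgt (MVar v) (EList va vb) = undefined"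
| "tgt MTrue (EVar va vb) = undefined"
| "tgt MTrue (ERec va vb) = undefined"
| "tgt MTrue (EList va vb) = undefined"
| "tgt MFalse (EVar va vb) = undefined"
| "tgt MFalse (ERec va vb) = undefined"
| "tgt MFalse (EList va vb) = undefined"
| "tgt MNil (EVar va vb) = undefined"
| "tgt MNil (EBool va vb) = undefined"
| "tgt MNil (ERec va vb) = undefined"
| "tgt (MCons w1 w2) (EVar va vb) = undefined"
| "tgt (MCons w1 w2) (EBool va vb) = undefined"
| "tgt (MCons w1 w2) (ERec va vb) = undefined"
| "tgt (MRec ws) (EVar va vb) = undefined"
| "tgt (MRec ws) (EBool va vb) = undefined"
| "tgt (MRec ws) (EList va vb) = undefined"
  by pat_completeness auto
termination
  apply (relation "measure (size \<circ> fst)")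
  apply (auto simp: size_butlast_less size_butlast_less2 size_snd_last_less)
  done

declare tgt.simps(6) [simp del]


section \<open>Destructors (used to read off components; total, arbitrary on other shapes)\<close>

primrec ann_val :: "'a val \<Rightarrow> 'a" where
  "ann_val (VTrue a) = a" | "ann_val (VFalse a) = a" | "ann_val (VInt n a) = a"
| "ann_val (VNil a) = a" | "ann_val (VCons a u v) = a" | "ann_val (VRec fs a) = a"
| "ann_val (VClos \<gamma> h s) = undefined"

primrec cons_hd :: "'a val \<Rightarrow> 'a val" where
  "cons_hd (VCons a u v) = u" | "cons_hd (VTrue a) = undefined" | "cons_hd (VFalse a) = undefined"
| "cons_hd (VInt n a) = undefined" | "cons_hd (VNil a) = undefined"
| "cons_hd (VRec fs a) = undefined" | "cons_hd (VClos \<gamma> h s) = undefined"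

primrec cons_tl :: "'a val \<Rightarrow> 'a val" where
  "cons_tl (VCons a u v) = v" | "cons_tl (VTrue a) = undefined" | "cons_tl (VFalse a) = undefined"
| "cons_tl (VInt n a) = undefined" | "cons_tl (VNil a) = undefined"
| "cons_tl (VRec fs a) = undefined" | "cons_tl (VClos \<gamma> h s) = undefined"

primrec rec_fields :: "'a val \<Rightarrow> (var \<times> 'a val) list" where
  "rec_fields (VRec fs a) = fs" | "rec_fields (VTrue a) = undefined"
| "rec_fields (VFalse a) = undefined" | "rec_fields (VInt n a) = undefined"
| "rec_fields (VNil a) = undefined" | "rec_fields (VCons a u v) = undefined"
| "rec_fields (VClos \<gamma> h s) = undefined"

primrec var_cont :: "'a elim \<Rightarrow> 'a cont" where
  "var_cont (EVar x k) = k" | "var_cont (EBool k k') = undefined"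
| "var_cont (ERec xs k) = undefined" | "var_cont (EList k s) = undefined"

primrec true_cont :: "'a elim \<Rightarrow> 'a cont" where
  "true_cont (EBool k k') = k" | "true_cont (EVar x k) = undefined"
| "true_cont (ERec xs k) = undefined" | "true_cont (EList k s) = undefined"

primrec false_cont :: "'a elim \<Rightarrow> 'a cont" where
  "false_cont (EBool k k') = k'" | "false_cont (EVar x k) = undefined"
| "false_cont (ERec xs k) = undefined" | "false_cont (EList k s) = undefined"

primrec nil_cont :: "'a elim \<Rightarrow> 'a cont" where
  "nil_cont (EList k s) = k" | "nil_cont (EVar x k) = undefined"
| "nil_cont (ERec xs k) = undefined" | "nil_cont (EBool k k') = undefined"

primrec cons_elim :: "'a elim \<Rightarrow> 'a elim" where
  "cons_elim (EList k s) = s" | "cons_elim (EVar x k) = undefined"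
| "cons_elim (ERec xs k) = undefined" | "cons_elim (EBool k k') = undefined"

primrec rec_names :: "'a elim \<Rightarrow> var list" where
  "rec_names (ERec xs k) = xs" | "rec_names (EVar x k) = undefined"
| "rec_names (EList k s) = undefined" | "rec_names (EBool k k') = undefined"

primrec rec_cont :: "'a elim \<Rightarrow> 'a cont" where
  "rec_cont (ERec xs k) = k" | "rec_cont (EVar x k) = undefined"
| "rec_cont (EList k s) = undefined" | "rec_cont (EBool k k') = undefined"

primrec elim_of :: "'a cont \<Rightarrow> 'a elim" where
  "elim_of (CElim s) = s" | "elim_of (CTrm t) = undefined"

text \<open>Defined by recursion on the derivation w, following the clauses of the paper; the
 components of v and sigma are read off with the destructors above (on inputs of the shape
 prescribed by w these are exactly the pattern-matched components).\<close>

function fwd :: "mderiv \<Rightarrow> 'a::bounded_lattice val \<Rightarrow> 'a elim \<Rightarrow> 'a env \<times> 'a cont \<times> 'a" where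
  "fwd (MVar x) v \<sigma> = ([(x, v)], var_cont \<sigma>, top)"
| "fwd MTrue v \<sigma> = ([], true_cont \<sigma>, ann_val v)"
| "fwd MFalse v \<sigma> = ([], false_cont \<sigma>, ann_val v)"
| "fwd MNil v \<sigma> = ([], nil_cont \<sigma>, ann_val v)"
| "fwd (MCons w1 w2) v \<sigma> =
     (let (\<rho>1, \<tau>, \<beta>) = fwd w1 (cons_hd v) (cons_elim \<sigma>);
          (\<rho>2, \<kappa>, \<beta>') = fwd w2 (cons_tl v) (elim_of \<tau>)
      in (\<rho>1 @ \<rho>2, \<kappa>, inf (inf (ann_val v) \<beta>) \<beta>'))"
| "fwd (MRec ws) v \<sigma> =
     (if ws = [] then ([], rec_cont \<sigma>, ann_val v) else
      (let fs = rec_fields v; xs = rec_names \<sigma>;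
           (\<rho>, \<sigma>', \<beta>) = fwd (MRec (butlast ws)) (VRec (butlast fs) top)
                               (ERec (butlast xs) (rec_cont \<sigma>));
           (\<rho>', \<kappa>, \<beta>') = fwd (snd (last ws)) (snd (last fs)) (elim_of \<sigma>')
       in (\<rho> @ \<rho>', \<kappa>, inf (inf (ann_val v) \<beta>) \<beta>')))"
  by pat_completeness auto
termination
  apply (relation "measure (size \<circ> fst)")
  apply (auto simp: size_butlast_less size_butlast_less2 size_snd_last_less)
  done

declare fwd.simps(6) [simp del]

text \<open>The backward function is indexed by the derivation w :: v, sigma => rho, kappa;
 besides w it takes the raw eliminator sigma, which determines the least selections of
 untaken branches and, via tgt, the raw intermediate eliminators.  Environment selections
 are split according to the number of bindings (mlen) of the first sub-derivation, i.e.
 the length of the raw environment it produces.\<close>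

abbreviation bot_cont :: "unit cont \<Rightarrow> 'a::bot cont" where
  "bot_cont k \<equiv> map_cont (\<lambda>_. bot) k"
abbreviation bot_elim :: "unit elim \<Rightarrow> 'a::bot elim" where
  "bot_elim s \<equiv> map_elim (\<lambda>_. bot) s"

function bwd :: "mderiv \<Rightarrow> unit elim \<Rightarrow> 'a::bounded_lattice env \<Rightarrow> 'a cont \<Rightarrow> 'a
    \<Rightarrow> 'a val \<times> 'a elim" where
  "bwd (MVar x) sr \<rho> \<kappa> \<alpha> = (snd (hd \<rho>), EVar x \<kappa>)"
| "bwd MTrue sr \<rho> \<kappa> \<alpha> = (VTrue \<alpha>, EBool \<kappa> (bot_cont (false_cont sr)))"
| "bwd MFalse sr \<rho> \<kappa> \<alpha> = (VFalse \<alpha>, EBool (bot_cont (true_cont sr)) \<kappa>)"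
| "bwd MNil sr \<rho> \<kappa> \<alpha> = (VNil \<alpha>, EList \<kappa> (bot_elim (cons_elim sr)))"
| "bwd (MCons w1 w2) sr \<rho> \<kappa> \<alpha> =
     (let s1 = cons_elim sr;
          (v2, \<tau>) = bwd w2 (elim_of (tgt w1 s1)) (drop (mlen w1) \<rho>) \<kappa> \<alpha>;
          (v1, \<sigma>1) = bwd w1 s1 (take (mlen w1) \<rho>) (CElim \<tau>) \<alpha>
      in (VCons \<alpha> v1 v2, EList (bot_cont (nil_cont sr)) \<sigma>1))"
| "bwd (MRec ws) sr \<rho> \<kappa> \<alpha> =
     (if ws = [] then (VRec [] \<alpha>, ERec [] \<kappa>) else
      (let w' = MRec (butlast ws); sr' = ERec (butlast (rec_names sr)) (rec_cont sr);
           n = mlen w';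
           (vk, \<sigma>') = bwd (snd (last ws)) (elim_of (tgt w' sr')) (drop n \<rho>) \<kappa> \<alpha>;
           (v', s') = bwd w' sr' (take n \<rho>) (CElim \<sigma>') \<alpha>
       in (VRec (rec_fields v' @ [(fst (last ws), vk)]) \<alpha>, ERec (rec_names sr) (rec_cont s'))))"
  by pat_completeness auto
termination
  apply (relation "measure (size \<circ> fst)")
  apply (auto simp: size_butlast_less size_butlast_less2 size_snd_last_less)
  done

declare bwd.simps(6) [simp del]

end

theory Submission
  imports Defs
begin

text \<open>All four properties are formal consequences of the adjunction
  bwd(\<rho>, \<kappa>, \<alpha>) \<le> (v, \<sigma>)  \<longleftrightarrow>  (\<rho>, \<kappa>, \<alpha>) \<le> fwd(v, \<sigma>),
  which is proved by induction on the derivation.  In the sequential cases (cons and records) the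
  adjunctions of the two sub-derivations chain through the intermediate eliminator: bwd of the
  second sub-derivation produces the eliminator fed to bwd of the first, and fwd of the first
  produces the one fed to fwd of the second.  The meet \<alpha> \<sqinter> \<beta> \<sqinter> \<beta>' formed by fwd matches the
  fact that bwd hands the same \<alpha> to the node and to both sub-derivations.\<close>

lemma list_all2_append_right:
  "list_all2 P xs (ys @ zs) \<longleftrightarrow>
    list_all2 P (take (length ys) xs) ys \<and> list_all2 P (drop (length ys) xs) zs"
proof
  assume all: "list_all2 P xs (ys @ zs)"
  have "list_all2 P (take (length ys) xs) (take (length ys) (ys @ zs))"
    using all by (rule list_all2_takeI)
  moreover have "list_all2 P (drop (length ys) xs) (drop (length ys) (ys @ zs))"
    using all by (rule list_all2_dropI)
  ultimately show "list_all2 P (take (length ys) xs) ys \<and> list_all2 P (drop (length ys) xs) zs"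
    by simp
next
  assume "list_all2 P (take (length ys) xs) ys \<and> list_all2 P (drop (length ys) xs) zs"
  then have "list_all2 P (take (length ys) xs @ drop (length ys) xs) (ys @ zs)"
    by (blast intro: list_all2_appendI)
  then show "list_all2 P xs (ys @ zs)"
    by simp
qed

lemma galois_connection_of_adjunction:
  assumes "reflp le\<^sub>A" and "transp le\<^sub>A" and "reflp le\<^sub>B" and "transp le\<^sub>B"
    and l_into: "\<And>y. y \<in> B \<Longrightarrow> l y \<in> A" and r_into: "\<And>x. x \<in> A \<Longrightarrow> r x \<in> B"
    and adj: "\<And>x y. x \<in> A \<Longrightarrow> y \<in> B \<Longrightarrow> le\<^sub>A (l y) x \<longleftrightarrow> le\<^sub>B y (r x)"
  shows unit: "\<And>y. y \<in> B \<Longrightarrow> le\<^sub>B y (r (l y))"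
    and counit: "\<And>x. x \<in> A \<Longrightarrow> le\<^sub>A (l (r x)) x"
    and mono_l: "\<And>y y'. y \<in> B \<Longrightarrow> y' \<in> B \<Longrightarrow> le\<^sub>B y y' \<Longrightarrow> le\<^sub>A (l y) (l y')"
    and mono_r: "\<And>x x'. x \<in> A \<Longrightarrow> x' \<in> A \<Longrightarrow> le\<^sub>A x x' \<Longrightarrow> le\<^sub>B (r x) (r x')"
proof -
  show unit: "le\<^sub>B y (r (l y))" if "y \<in> B" for y
    using adj[OF l_into[OF that] that] reflpD[OF \<open>reflp le\<^sub>A\<close>] by blast
  show counit: "le\<^sub>A (l (r x)) x" if "x \<in> A" for x
    using adj[OF that r_into[OF that]] reflpD[OF \<open>reflp le\<^sub>B\<close>] by blast
  show "le\<^sub>A (l y) (l y')" if "y \<in> B" "y' \<in> B" "le\<^sub>B y y'" for y y'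
    using adj[OF l_into[OF that(2)] that(1)] unit[OF that(2)] that(3)
      transpD[OF \<open>transp le\<^sub>B\<close>] by blast
  show "le\<^sub>B (r x) (r x')" if "x \<in> A" "x' \<in> A" "le\<^sub>A x x'" for x x'
    using adj[OF that(2) r_into[OF that(1)]] counit[OF that(1)] that(3)
      transpD[OF \<open>transp le\<^sub>A\<close>] by blast
qed

lemmas Sel_defs = Sel_val_def Sel_elim_def Sel_cont_def Sel_env_def

lemma map_val_eq_VTrue_iff: "map_val f v = VTrue b \<longleftrightarrow> (\<exists>a. v = VTrue a \<and> f a = b)"
  by (cases v) auto
lemma map_val_eq_VFalse_iff: "map_val f v = VFalse b \<longleftrightarrow> (\<exists>a. v = VFalse a \<and> f a = b)"
  by (cases v) auto
lemma map_val_eq_VNil_iff: "map_val f v = VNil b \<longleftrightarrow> (\<exists>a. v = VNil a \<and> f a = b)"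
  by (cases v) auto
lemma map_val_eq_VCons_iff:
  "map_val f v = VCons b u1 u2 \<longleftrightarrow>
    (\<exists>a v1 v2. v = VCons a v1 v2 \<and> f a = b \<and> map_val f v1 = u1 \<and> map_val f v2 = u2)"
  by (cases v) auto
lemma map_val_eq_VRec_iff:
  "map_val f v = VRec fs b \<longleftrightarrow>
    (\<exists>a gs. v = VRec gs a \<and> f a = b \<and> map (map_prod id (map_val f)) gs = fs)"
  by (cases v) auto
lemma map_elim_eq_EVar_iff: "map_elim f s = EVar x k \<longleftrightarrow> (\<exists>k'. s = EVar x k' \<and> map_cont f k' = k)"
  by (cases s) auto
lemma map_elim_eq_EBool_iff:
  "map_elim f s = EBool k1 k2 \<longleftrightarrow>
    (\<exists>k1' k2'. s = EBool k1' k2' \<and> map_cont f k1' = k1 \<and> map_cont f k2' = k2)"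
  by (cases s) auto
lemma map_elim_eq_EList_iff:
  "map_elim f s = EList k s2 \<longleftrightarrow>
    (\<exists>k' s2'. s = EList k' s2' \<and> map_cont f k' = k \<and> map_elim f s2' = s2)"
  by (cases s) auto
lemma map_elim_eq_ERec_iff: "map_elim f s = ERec xs k \<longleftrightarrow> (\<exists>k'. s = ERec xs k' \<and> map_cont f k' = k)"
  by (cases s) auto
lemma map_cont_eq_CElim_iff: "map_cont f c = CElim s \<longleftrightarrow> (\<exists>s'. c = CElim s' \<and> map_elim f s' = s)"
  by (cases c) auto

lemmas map_eq_constructor_iff = map_val_eq_VTrue_iff map_val_eq_VFalse_iff map_val_eq_VNil_iff
  map_val_eq_VCons_iff map_val_eq_VRec_iff map_elim_eq_EVar_iff map_elim_eq_EBool_iff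
  map_elim_eq_EList_iff map_elim_eq_ERec_iff map_cont_eq_CElim_iff

lemma const_unit_eq_id: "(\<lambda>_::unit. ()) = (\<lambda>x. x)"
  by (rule ext) simp

lemma erase_cont_unit [simp]: "erase_cont (k :: unit cont) = k"
  by (simp only: const_unit_eq_id cont.map_ident)

lemma erase_elim_unit [simp]: "erase_elim (s :: unit elim) = s"
  by (simp only: const_unit_eq_id elim.map_ident)

lemma erase_bot_cont [simp]: "erase_cont (bot_cont k :: 'a::bot cont) = k"
  by (simp add: cont.map_comp o_def)

lemma erase_bot_elim [simp]: "erase_elim (bot_elim s :: 'a::bot elim) = s"
  by (simp add: elim.map_comp o_def)

lemma bot_cont_leq: "leq_cont (bot_cont (erase_cont k)) (k :: 'a::order_bot cont)"
  by (simp add: cont.rel_map cont.map_comp o_def) (rule cont.rel_refl, simp)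

lemma bot_elim_leq: "leq_elim (bot_elim (erase_elim s)) (s :: 'a::order_bot elim)"
  by (simp add: elim.rel_map elim.map_comp o_def) (rule elim.rel_refl, simp)

lemma Sel_env_length: "\<rho> \<in> Sel_env rr \<Longrightarrow> length \<rho> = length rr"
  by (auto simp: Sel_env_def)

lemma Sel_env_append_iff:
  "\<rho> \<in> Sel_env (r1 @ r2) \<longleftrightarrow> take (length r1) \<rho> \<in> Sel_env r1 \<and> drop (length r1) \<rho> \<in> Sel_env r2"
proof -
  have "erase_env \<rho> = r1 @ r2 \<longleftrightarrow>
      take (length r1) (erase_env \<rho>) = r1 \<and> drop (length r1) (erase_env \<rho>) = r2"
    by (metis append_eq_conv_conj)
  then show ?thesis
    by (simp add: Sel_env_def take_map drop_map)
qed

lemma Sel_val_VRec_snocE: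
  assumes "v \<in> Sel_val (VRec (fs @ [(x, vk)]) ())"
  obtains a gs u where "v = VRec (gs @ [(x, u)]) a" and "\<And>b. VRec gs b \<in> Sel_val (VRec fs ())"
    and "u \<in> Sel_val vk"
proof -
  from assms obtain a gs' where v: "v = VRec gs' a"
    and "map (map_prod id erase_val) gs' = fs @ [(x, vk)]"
    by (auto simp: Sel_val_def map_val_eq_VRec_iff)
  then obtain gs g where "gs' = gs @ [g]" "map (map_prod id erase_val) gs = fs"
    and "map_prod id erase_val g = (x, vk)"
    by (cases gs' rule: rev_cases) auto
  with v show ?thesis
    by (cases g) (auto intro!: that simp: Sel_val_def)
qed

lemma Sel_cont_CElimE:
  assumes "t \<in> Sel_cont (CElim \<tau>)"
  obtains t' where "t = CElim t'" and "t' \<in> Sel_elim \<tau>"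
  using assms by (auto simp: Sel_defs map_cont_eq_CElim_iff)

lemma CElim_in_Sel_cont_iff [simp]: "CElim t \<in> Sel_cont (CElim \<tau>) \<longleftrightarrow> t \<in> Sel_elim \<tau>"
  by (simp add: Sel_defs)

lemma leq_VS_eq_rel_prod: "leq_VS = rel_prod leq_val leq_elim"
  by (auto simp: leq_VS_def fun_eq_iff rel_prod_sel)

lemma leq_RKA_eq_rel_prod: "leq_RKA = rel_prod leq_env (rel_prod leq_cont (\<le>))"
  by (auto simp: leq_RKA_def fun_eq_iff rel_prod_sel split: prod.splits)

lemma leq_VS_preorder:
  shows "reflp (leq_VS :: 'a::order val \<times> 'a elim \<Rightarrow> _)"
    and "transp (leq_VS :: 'a::order val \<times> 'a elim \<Rightarrow> _)"
  by (simp_all add: leq_VS_eq_rel_prod prod.rel_reflp prod.rel_transp val.rel_reflp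
      val.rel_transp elim.rel_reflp elim.rel_transp)

lemma leq_RKA_preorder:
  shows "reflp (leq_RKA :: 'a::order env \<times> 'a cont \<times> 'a \<Rightarrow> _)"
    and "transp (leq_RKA :: 'a::order env \<times> 'a cont \<times> 'a \<Rightarrow> _)"
  by (simp_all add: leq_RKA_eq_rel_prod prod.rel_reflp prod.rel_transp val.rel_reflp
      val.rel_transp cont.rel_reflp cont.rel_transp list.rel_reflp list.rel_transp)

lemma matches_tgt_mlen: "matches w vr sr rr kr \<Longrightarrow> tgt w sr = kr \<and> mlen w = length rr"
  by (induction rule: matches.induct) (auto simp: tgt.simps(6) mlen.simps(6))

lemma fwd_MRec_Nil: "fwd (MRec []) v \<sigma> = ([], rec_cont \<sigma>, ann_val v)"
  by (simp add: fwd.simps(6))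

lemma bwd_MRec_Nil: "bwd (MRec []) sr \<rho> \<kappa> \<alpha> = (VRec [] \<alpha>, ERec [] \<kappa>)"
  by (simp add: bwd.simps(6))

lemma fwd_MRec_snoc:
  "fwd (MRec (ws @ [(x, wk)])) (VRec (fs @ [(y, u)]) a) (ERec (xs @ [z]) k0) =
    (let (\<rho>, \<sigma>', \<beta>) = fwd (MRec ws) (VRec fs top) (ERec xs k0);
         (\<rho>', \<kappa>, \<beta>') = fwd wk u (elim_of \<sigma>')
     in (\<rho> @ \<rho>', \<kappa>, inf (inf a \<beta>) \<beta>'))"
  by (subst fwd.simps(6)) simp

lemma bwd_MRec_snoc:
  "bwd (MRec (ws @ [(x, wk)])) (ERec (xs @ [z]) k0) \<rho> \<kappa> \<alpha> =
    (let (vk, \<sigma>') = bwd wk (elim_of (tgt (MRec ws) (ERec xs k0))) (drop (mlen (MRec ws)) \<rho>) \<kappa> \<alpha>;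
         (v', s') = bwd (MRec ws) (ERec xs k0) (take (mlen (MRec ws)) \<rho>) (CElim \<sigma>') \<alpha>
     in (VRec (rec_fields v' @ [(x, vk)]) \<alpha>, ERec (xs @ [z]) (rec_cont s')))"
  by (subst bwd.simps(6)) (simp add: Let_def)

lemma fwd_in_Sel:
  assumes "matches w vr sr rr kr" and "v \<in> Sel_val vr" and "\<sigma> \<in> Sel_elim sr"
  shows "fst (fwd w v \<sigma>) \<in> Sel_env rr \<and> fst (snd (fwd w v \<sigma>)) \<in> Sel_cont kr"
  using assms
proof (induction arbitrary: v \<sigma> rule: matches.induct)
  case (m_cons w1 v1 \<sigma>1 \<rho>1 \<tau> w2 v2 \<rho>2 \<kappa> \<kappa>0)
  then obtain a u1 u2 k0 s1 where v: "v = VCons a u1 u2" "u1 \<in> Sel_val v1" "u2 \<in> Sel_val v2"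
    and \<sigma>: "\<sigma> = EList k0 s1" "s1 \<in> Sel_elim \<sigma>1"
    by (auto simp: Sel_defs map_eq_constructor_iff)
  obtain r1 t \<beta> where f1: "fwd w1 u1 s1 = (r1, t, \<beta>)"
    by (metis prod_cases3)
  with m_cons.IH(1)[OF v(2) \<sigma>(2)] have r1: "r1 \<in> Sel_env \<rho>1" and t_Sel: "t \<in> Sel_cont (CElim \<tau>)"
    by simp_all
  from t_Sel obtain t' where t: "t = CElim t'" "t' \<in> Sel_elim \<tau>"
    by (rule Sel_cont_CElimE)
  obtain r2 k \<beta>' where f2: "fwd w2 u2 t' = (r2, k, \<beta>')"
    by (metis prod_cases3)
  with m_cons.IH(2)[OF v(3) t(2)] have "r2 \<in> Sel_env \<rho>2" "k \<in> Sel_cont \<kappa>"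
    by simp_all
  with r1 show ?case
    using v \<sigma> f1 f2 t by (simp add: Sel_defs)
next
  case (m_rec ws fs xs \<kappa>0 \<rho>1 \<sigma>' wk vk \<rho>2 \<kappa> x)
  from m_rec.prems obtain a gs u where v: "v = VRec (gs @ [(x, u)]) a"
    "VRec gs top \<in> Sel_val (VRec fs ())" "u \<in> Sel_val vk"
    by (elim Sel_val_VRec_snocE) blast
  from m_rec.prems obtain k0 where \<sigma>: "\<sigma> = ERec (xs @ [x]) k0" "ERec xs k0 \<in> Sel_elim (ERec xs \<kappa>0)"
    by (auto simp: Sel_defs map_eq_constructor_iff)
  obtain r1 t \<beta> where f1: "fwd (MRec ws) (VRec gs top) (ERec xs k0) = (r1, t, \<beta>)"
    by (metis prod_cases3)
  with m_rec.IH(1)[OF v(2) \<sigma>(2)] have r1: "r1 \<in> Sel_env \<rho>1" and t_Sel: "t \<in> Sel_cont (CElim \<sigma>')"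
    by simp_all
  from t_Sel obtain t' where t: "t = CElim t'" "t' \<in> Sel_elim \<sigma>'"
    by (rule Sel_cont_CElimE)
  obtain r2 k \<beta>' where f2: "fwd wk u t' = (r2, k, \<beta>')"
    by (metis prod_cases3)
  with m_rec.IH(2)[OF v(3) t(2)] have "r2 \<in> Sel_env \<rho>2" "k \<in> Sel_cont \<kappa>"
    by simp_all
  with r1 show ?case
    using v \<sigma> f1 f2 t by (simp add: Sel_defs fwd_MRec_snoc)
qed (auto simp: Sel_defs map_eq_constructor_iff fwd_MRec_Nil)

lemma bwd_in_Sel:
  assumes "matches w vr sr rr kr" and "\<rho> \<in> Sel_env rr" and "\<kappa> \<in> Sel_cont kr"
  shows "fst (bwd w sr \<rho> \<kappa> \<alpha>) \<in> Sel_val vr \<and> snd (bwd w sr \<rho> \<kappa> \<alpha>) \<in> Sel_elim sr"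
  using assms
proof (induction arbitrary: \<rho> \<kappa> rule: matches.induct)
  case (m_cons w1 v1 \<sigma>1 \<rho>1 \<tau> w2 v2 \<rho>2 \<kappa>2 \<kappa>0)
  let ?n = "mlen w1"
  have tgt: "tgt w1 \<sigma>1 = CElim \<tau>" and n: "?n = length \<rho>1"
    using matches_tgt_mlen[OF m_cons.hyps(1)] by auto
  from m_cons.prems n have \<rho>1: "take ?n \<rho> \<in> Sel_env \<rho>1" and \<rho>2: "drop ?n \<rho> \<in> Sel_env \<rho>2"
    by (simp_all add: Sel_env_append_iff)
  obtain u2 t where b2: "bwd w2 \<tau> (drop ?n \<rho>) \<kappa> \<alpha> = (u2, t)"
    by fastforce
  with m_cons.IH(2)[OF \<rho>2 m_cons.prems(2)] have u2: "u2 \<in> Sel_val v2" and t: "t \<in> Sel_elim \<tau>"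
    by simp_all
  obtain u1 s1 where b1: "bwd w1 \<sigma>1 (take ?n \<rho>) (CElim t) \<alpha> = (u1, s1)"
    by fastforce
  with m_cons.IH(1)[OF \<rho>1, of "CElim t"] t have "u1 \<in> Sel_val v1" "s1 \<in> Sel_elim \<sigma>1"
    by simp_all
  with u2 show ?case
    using tgt b1 b2 by (simp add: Sel_defs)
next
  case (m_rec ws fs xs \<kappa>0 \<rho>1 \<sigma>' wk vk \<rho>2 \<kappa>2 x)
  let ?n = "mlen (MRec ws)"
  have tgt: "tgt (MRec ws) (ERec xs \<kappa>0) = CElim \<sigma>'" and n: "?n = length \<rho>1"
    using matches_tgt_mlen[OF m_rec.hyps(1)] by auto
  from m_rec.prems n have \<rho>1: "take ?n \<rho> \<in> Sel_env \<rho>1" and \<rho>2: "drop ?n \<rho> \<in> Sel_env \<rho>2"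
    by (simp_all add: Sel_env_append_iff)
  obtain u t where b2: "bwd wk \<sigma>' (drop ?n \<rho>) \<kappa> \<alpha> = (u, t)"
    by fastforce
  with m_rec.IH(2)[OF \<rho>2 m_rec.prems(2)] have u: "u \<in> Sel_val vk" and t: "t \<in> Sel_elim \<sigma>'"
    by simp_all
  obtain v' s' where b1: "bwd (MRec ws) (ERec xs \<kappa>0) (take ?n \<rho>) (CElim t) \<alpha> = (v', s')"
    by fastforce
  with m_rec.IH(1)[OF \<rho>1, of "CElim t"] t have "v' \<in> Sel_val (VRec fs ())" "s' \<in> Sel_elim (ERec xs \<kappa>0)"
    by simp_all
  then obtain gs b c where "v' = VRec gs b" "map (map_prod id erase_val) gs = fs"
    and "s' = ERec xs c" "erase_cont c = \<kappa>0"
    by (auto simp: Sel_defs map_eq_constructor_iff)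
  with u show ?case
    using tgt b1 b2 by (simp add: Sel_defs bwd_MRec_snoc)
qed (auto simp: Sel_defs map_eq_constructor_iff bwd_MRec_Nil)

lemma bwd_leq_iff_leq_fwd:
  assumes "matches w vr sr rr kr"
    and "\<rho> \<in> Sel_env rr" and "\<kappa> \<in> Sel_cont kr" and "v \<in> Sel_val vr" and "\<sigma> \<in> Sel_elim sr"
  shows "leq_VS (bwd w sr \<rho> \<kappa> \<alpha>) (v, \<sigma>) \<longleftrightarrow> leq_RKA (\<rho>, \<kappa>, \<alpha>) (fwd w v \<sigma>)"
  using assms
proof (induction arbitrary: \<rho> \<kappa> \<alpha> v \<sigma> rule: matches.induct)
  case (m_cons w1 v1 \<sigma>1 \<rho>1 \<tau> w2 v2 \<rho>2 \<kappa>2 \<kappa>0)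
  let ?n = "mlen w1"
  have tgt: "tgt w1 \<sigma>1 = CElim \<tau>" and n: "?n = length \<rho>1"
    using matches_tgt_mlen[OF m_cons.hyps(1)] by auto
  from m_cons.prems n have \<rho>1: "take ?n \<rho> \<in> Sel_env \<rho>1" and \<rho>2: "drop ?n \<rho> \<in> Sel_env \<rho>2"
    by (simp_all add: Sel_env_append_iff)
  from m_cons.prems obtain a u1 u2 k0 s1 where v: "v = VCons a u1 u2" "u1 \<in> Sel_val v1" "u2 \<in> Sel_val v2"
    and \<sigma>: "\<sigma> = EList k0 s1" "s1 \<in> Sel_elim \<sigma>1" "erase_cont k0 = \<kappa>0"
    by (auto simp: Sel_defs map_eq_constructor_iff)
  obtain r1 t \<beta> where f1: "fwd w1 u1 s1 = (r1, t, \<beta>)"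
    by (metis prod_cases3)
  with fwd_in_Sel[OF m_cons.hyps(1) v(2) \<sigma>(2)] have r1: "r1 \<in> Sel_env \<rho>1"
    and t_Sel: "t \<in> Sel_cont (CElim \<tau>)"
    by simp_all
  from t_Sel obtain t' where t: "t = CElim t'" "t' \<in> Sel_elim \<tau>"
    by (rule Sel_cont_CElimE)
  obtain r2 k \<beta>' where f2: "fwd w2 u2 t' = (r2, k, \<beta>')"
    by (metis prod_cases3)
  obtain u2' \<tau>' where b2: "bwd w2 \<tau> (drop ?n \<rho>) \<kappa> \<alpha> = (u2', \<tau>')"
    by fastforce
  with bwd_in_Sel[OF m_cons.hyps(2) \<rho>2 m_cons.prems(2), where \<alpha> = \<alpha>] have \<tau>': "\<tau>' \<in> Sel_elim \<tau>"
    by simp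
  obtain u1' s1' where b1: "bwd w1 \<sigma>1 (take ?n \<rho>) (CElim \<tau>') \<alpha> = (u1', s1')"
    by fastforce
  have "leq_VS (bwd (MCons w1 w2) (EList \<kappa>0 \<sigma>1) \<rho> \<kappa> \<alpha>) (v, \<sigma>) \<longleftrightarrow>
      \<alpha> \<le> a \<and> leq_VS (u1', s1') (u1, s1) \<and> leq_val u2' u2"
    using tgt b1 b2 v \<sigma> bot_cont_leq[of k0] by (auto simp: leq_VS_def)
  also have "\<dots> \<longleftrightarrow> \<alpha> \<le> a \<and> leq_env (take ?n \<rho>) r1 \<and> \<alpha> \<le> \<beta> \<and> leq_VS (u2', \<tau>') (u2, t')"
    using m_cons.IH(1)[OF \<rho>1 _ v(2) \<sigma>(2), of "CElim \<tau>'" \<alpha>] \<tau>' b1 f1 t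
    by (auto simp: leq_RKA_def leq_VS_def)
  also have "\<dots> \<longleftrightarrow> \<alpha> \<le> a \<and> leq_env (take ?n \<rho>) r1 \<and> \<alpha> \<le> \<beta> \<and>
      leq_env (drop ?n \<rho>) r2 \<and> leq_cont \<kappa> k \<and> \<alpha> \<le> \<beta>'"
    using m_cons.IH(2)[OF \<rho>2 m_cons.prems(2) v(3) t(2), of \<alpha>] b2 f2
    by (auto simp: leq_RKA_def)
  also have "\<dots> \<longleftrightarrow> leq_RKA (\<rho>, \<kappa>, \<alpha>) (fwd (MCons w1 w2) v \<sigma>)"
    using v \<sigma> f1 f2 t n Sel_env_length[OF r1] by (auto simp: leq_RKA_def list_all2_append_right)
  finally show ?case .
next
  case (m_rec ws fs xs \<kappa>0 \<rho>1 \<sigma>' wk vk \<rho>2 \<kappa>2 x)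
  let ?n = "mlen (MRec ws)"
  have tgt: "tgt (MRec ws) (ERec xs \<kappa>0) = CElim \<sigma>'" and n: "?n = length \<rho>1"
    using matches_tgt_mlen[OF m_rec.hyps(1)] by auto
  from m_rec.prems n have \<rho>1: "take ?n \<rho> \<in> Sel_env \<rho>1" and \<rho>2: "drop ?n \<rho> \<in> Sel_env \<rho>2"
    by (simp_all add: Sel_env_append_iff)
  from m_rec.prems obtain a gs u where v: "v = VRec (gs @ [(x, u)]) a"
    "VRec gs top \<in> Sel_val (VRec fs ())" "u \<in> Sel_val vk"
    by (elim Sel_val_VRec_snocE) blast
  from m_rec.prems obtain k0 where \<sigma>: "\<sigma> = ERec (xs @ [x]) k0" "ERec xs k0 \<in> Sel_elim (ERec xs \<kappa>0)"
    by (auto simp: Sel_defs map_eq_constructor_iff)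
  obtain r1 t \<beta> where f1: "fwd (MRec ws) (VRec gs top) (ERec xs k0) = (r1, t, \<beta>)"
    by (metis prod_cases3)
  with fwd_in_Sel[OF m_rec.hyps(1) v(2) \<sigma>(2)] have r1: "r1 \<in> Sel_env \<rho>1"
    and t_Sel: "t \<in> Sel_cont (CElim \<sigma>')"
    by simp_all
  from t_Sel obtain t' where t: "t = CElim t'" "t' \<in> Sel_elim \<sigma>'"
    by (rule Sel_cont_CElimE)
  obtain r2 k \<beta>' where f2: "fwd wk u t' = (r2, k, \<beta>')"
    by (metis prod_cases3)
  obtain u' \<tau>' where b2: "bwd wk \<sigma>' (drop ?n \<rho>) \<kappa> \<alpha> = (u', \<tau>')"
    by fastforce
  with bwd_in_Sel[OF m_rec.hyps(2) \<rho>2 m_rec.prems(2), where \<alpha> = \<alpha>] have \<tau>': "\<tau>' \<in> Sel_elim \<sigma>'"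
    by simp
  obtain v' s' where b1: "bwd (MRec ws) (ERec xs \<kappa>0) (take ?n \<rho>) (CElim \<tau>') \<alpha> = (v', s')"
    by fastforce
  with bwd_in_Sel[OF m_rec.hyps(1) \<rho>1, of "CElim \<tau>'" \<alpha>] \<tau>'
  have "v' \<in> Sel_val (VRec fs ())" "s' \<in> Sel_elim (ERec xs \<kappa>0)"
    by simp_all
  then obtain gs' b c where v': "v' = VRec gs' b" "length gs' = length gs" and s': "s' = ERec xs c"
    using v(2) by (auto simp: Sel_defs map_eq_constructor_iff dest: arg_cong[of _ _ length])
  \<comment> \<open>The prefix record is matched at annotation top, so the annotation b of v' drops out.\<close>
  have "leq_VS (bwd (MRec (ws @ [(x, wk)])) (ERec (xs @ [x]) \<kappa>0) \<rho> \<kappa> \<alpha>) (v, \<sigma>) \<longleftrightarrow>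
      \<alpha> \<le> a \<and> leq_VS (v', s') (VRec gs top, ERec xs k0) \<and> leq_val u' u"
    using tgt b1 b2 v \<sigma> v' s' by (auto simp: leq_VS_def bwd_MRec_snoc list_all2_append)
  also have "\<dots> \<longleftrightarrow> \<alpha> \<le> a \<and> leq_env (take ?n \<rho>) r1 \<and> \<alpha> \<le> \<beta> \<and> leq_VS (u', \<tau>') (u, t')"
    using m_rec.IH(1)[OF \<rho>1 _ v(2) \<sigma>(2), of "CElim \<tau>'" \<alpha>] \<tau>' b1 f1 t
    by (auto simp: leq_RKA_def leq_VS_def)
  also have "\<dots> \<longleftrightarrow> \<alpha> \<le> a \<and> leq_env (take ?n \<rho>) r1 \<and> \<alpha> \<le> \<beta> \<and>
      leq_env (drop ?n \<rho>) r2 \<and> leq_cont \<kappa> k \<and> \<alpha> \<le> \<beta>'"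
    using m_rec.IH(2)[OF \<rho>2 m_rec.prems(2) v(3) t(2), of \<alpha>] b2 f2
    by (auto simp: leq_RKA_def)
  also have "\<dots> \<longleftrightarrow> leq_RKA (\<rho>, \<kappa>, \<alpha>) (fwd (MRec (ws @ [(x, wk)])) v \<sigma>)"
    using v \<sigma> f1 f2 t n Sel_env_length[OF r1]
    by (auto simp: leq_RKA_def list_all2_append_right fwd_MRec_snoc)
  finally show ?case .
qed (auto simp: Sel_defs map_eq_constructor_iff fwd_MRec_Nil bwd_MRec_Nil leq_VS_def leq_RKA_def
    bot_cont_leq bot_elim_leq)

theorem mainTheorem3:
  fixes w :: mderiv and vr :: "unit val" and sr :: "unit elim"
    and rr :: "unit env" and kr :: "unit cont"
  assumes "matches w vr sr rr kr"
  shows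
    \<comment> \<open>bwd_w : Sel(rho) x Sel(kappa) x A -> Sel(v) x Sel(sigma)\<close>
    "(\<forall>(\<rho> :: 'a::bounded_lattice env) \<kappa> (\<alpha> :: 'a). \<rho> \<in> Sel_env rr \<and> \<kappa> \<in> Sel_cont kr \<longrightarrow>
        fst (bwd w sr \<rho> \<kappa> \<alpha>) \<in> Sel_val vr \<and> snd (bwd w sr \<rho> \<kappa> \<alpha>) \<in> Sel_elim sr)
   \<and>
    \<comment> \<open>fwd_w : Sel(v) x Sel(sigma) -> Sel(rho) x Sel(kappa) x A\<close>
    (\<forall>(v :: 'a val) \<sigma>. v \<in> Sel_val vr \<and> \<sigma> \<in> Sel_elim sr \<longrightarrow>
        fst (fwd w v \<sigma>) \<in> Sel_env rr \<and> fst (snd (fwd w v \<sigma>)) \<in> Sel_cont kr)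
   \<and>
    \<comment> \<open>bwd_w is monotone\<close>
    (\<forall>(\<rho> :: 'a env) \<kappa> \<alpha> \<rho>' \<kappa>' \<alpha>'.
        \<rho> \<in> Sel_env rr \<and> \<kappa> \<in> Sel_cont kr \<and> \<rho>' \<in> Sel_env rr \<and> \<kappa>' \<in> Sel_cont kr \<and>
        leq_RKA (\<rho>, \<kappa>, \<alpha>) (\<rho>', \<kappa>', \<alpha>') \<longrightarrow>
        leq_VS (bwd w sr \<rho> \<kappa> \<alpha>) (bwd w sr \<rho>' \<kappa>' \<alpha>'))
   \<and>
    \<comment> \<open>fwd_w is monotone\<close>
    (\<forall>(v :: 'a val) \<sigma> v' \<sigma>'.
        v \<in> Sel_val vr \<and> \<sigma> \<in> Sel_elim sr \<and> v' \<in> Sel_val vr \<and> \<sigma>' \<in> Sel_elim sr \<and>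
        leq_VS (v, \<sigma>) (v', \<sigma>') \<longrightarrow>
        leq_RKA (fwd w v \<sigma>) (fwd w v' \<sigma>'))
   \<and>
    \<comment> \<open>fwd_w (bwd_w (rho, kappa, alpha)) >= (rho, kappa, alpha)\<close>
    (\<forall>(\<rho> :: 'a env) \<kappa> \<alpha>. \<rho> \<in> Sel_env rr \<and> \<kappa> \<in> Sel_cont kr \<longrightarrow>
        leq_RKA (\<rho>, \<kappa>, \<alpha>) (case bwd w sr \<rho> \<kappa> \<alpha> of (v, \<sigma>) \<Rightarrow> fwd w v \<sigma>))
   \<and>
    \<comment> \<open>bwd_w (fwd_w (v, sigma)) <= (v, sigma)\<close>
    (\<forall>(v :: 'a val) \<sigma>. v \<in> Sel_val vr \<and> \<sigma> \<in> Sel_elim sr \<longrightarrow>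
        leq_VS (case fwd w v \<sigma> of (\<rho>, \<kappa>, \<alpha>) \<Rightarrow> bwd w sr \<rho> \<kappa> \<alpha>) (v, \<sigma>))"
proof -
  let ?A = "Sel_val vr \<times> Sel_elim sr" and ?B = "Sel_env rr \<times> Sel_cont kr \<times> (UNIV :: 'a set)"
  let ?bwd = "\<lambda>(\<rho>, \<kappa>, \<alpha>). bwd w sr \<rho> \<kappa> \<alpha>" and ?fwd = "\<lambda>(v, \<sigma>). fwd w v \<sigma>"
  have bwd_into: "?bwd y \<in> ?A" if "y \<in> ?B" for y
    using that bwd_in_Sel[OF assms] by (cases y) (auto simp: mem_Times_iff)
  have fwd_into: "?fwd x \<in> ?B" if "x \<in> ?A" for x
    using that fwd_in_Sel[OF assms] by (cases x) (auto simp: mem_Times_iff)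
  have adj: "leq_VS (?bwd y) x \<longleftrightarrow> leq_RKA y (?fwd x)" if "x \<in> ?A" "y \<in> ?B" for x y
    using that by (cases x, cases y) (simp add: bwd_leq_iff_leq_fwd[OF assms])
  note galois = galois_connection_of_adjunction[OF leq_VS_preorder leq_RKA_preorder bwd_into fwd_into adj]
  show ?thesis
    using bwd_in_Sel[OF assms] fwd_in_Sel[OF assms] galois by fastforce
qed

end
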